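(* Let $X$ and $Y$ be mm-spaces. If $d_{\mathrm{Eur}}(X,Y)=0$, then $X$ and $Y$ are mm-isomorphic.
   Context: An mm-space is a complete separable metric space $(X,d_X)$ with a Borel probability measure $m_X$. $X$ and $Y$ are mm-isomorphic if there is an isometry $f:\operatorname{supp}m_X\to\operatorname{supp}m_Y$ with $f_*m_X=m_Y$. $\Pi(m_X,m_Y)$: Borel probability measures on $X\times Y$ with marginals $m_X,m_Y$. $\{|d_X-d_Y|>\varepsilon\}:=\{(x_1,y_1,x_2,y_2)\in X\times Y\times X\times Y:|d_X(x_1,x_2)-d_Y(y_1,y_2)|>\varepsilon\}$. $d_{\mathrm{Eur}}(X,Y):=\inf_{\pi\in\Pi(m_X,m_Y)}\inf_{\varepsilon\ge0}\max\{\varepsilon,(\pi\otimes\pi)(|d_X-d_Y|>\varepsilon)\}$. *)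

theory Defs
  imports "HOL-Probability.Probability"
begin

text \<open>An mm-space: the underlying complete separable metric space is the type
  (class polish_space), together with a Borel probability measure.\<close>
definition mm_space :: "'a::polish_space measure \<Rightarrow> bool" where
  "mm_space M \<longleftrightarrow> prob_space M \<and> sets M = sets borel"

definition mm_support :: "'a::topological_space measure \<Rightarrow> 'a set" where
  "mm_support M = {x. \<forall>U. open U \<and> x \<in> U \<longrightarrow> emeasure M U > 0}"

definition mm_isomorphic :: "'a::polish_space measure \<Rightarrow> 'b::polish_space measure \<Rightarrow> bool" where
  "mm_isomorphic mX mY \<longleftrightarrow>
     (\<exists>f. bij_betw f (mm_support mX) (mm_support mY) \<and>
          (\<forall>x\<in>mm_support mX. \<forall>x'\<in>mm_support mX. dist (f x) (f x') = dist x x') \<and>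
          (\<forall>B\<in>sets mY. emeasure mY B = emeasure mX (f -` B \<inter> mm_support mX)))"

definition couplings :: "'a::polish_space measure \<Rightarrow> 'b::polish_space measure \<Rightarrow> ('a \<times> 'b) measure set" where
  "couplings mX mY = {\<pi>. prob_space \<pi> \<and> sets \<pi> = sets borel \<and>
       distr \<pi> borel fst = mX \<and> distr \<pi> borel snd = mY}"

definition dist_gap_set :: "real \<Rightarrow> (('a::metric_space \<times> 'b::metric_space) \<times> ('a \<times> 'b)) set" where
  "dist_gap_set \<epsilon> = {((x1, y1), (x2, y2)). \<bar>dist x1 x2 - dist y1 y2\<bar> > \<epsilon>}"

definition d_Eur :: "'a::polish_space measure \<Rightarrow> 'b::polish_space measure \<Rightarrow> real" where
  "d_Eur mX mY = (INF \<pi>\<in>couplings mX mY. INF \<epsilon>\<in>{0..}.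
      max \<epsilon> (measure (\<pi> \<Otimes>\<^sub>M \<pi>) (dist_gap_set \<epsilon>)))"

end

theory Submission
  imports Defs "HOL-Library.Diagonal_Subsequence"
begin

text \<open>Fix a dense sequence \<open>x\<^sub>i\<close> in the support of \<open>m\<^sub>X\<close>. A coupling of small distortion has, by
  Markov's inequality, points near each \<open>x\<^sub>i\<close> whose gap sections are small; their second coordinates
  \<open>y\<^sub>i\<close> reproduce the distances between \<open>x\<^sub>0, \<dots>, x\<^bsub>n-1\<^esub>\<close> up to \<open>\<delta>\<close> and carry the mass of each union
  of balls around the \<open>x\<^sub>i\<close> to slightly larger balls around the \<open>y\<^sub>i\<close>. This mass keeps every
  coordinate sequence in a compact set, so a diagonal subsequence converges to a configuration
  \<open>g\<^sub>i\<close> isometric to \<open>x\<^sub>i\<close>. Extending \<open>x\<^sub>i \<mapsto> g\<^sub>i\<close> to the support gives an isometry \<open>f\<close> with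
  \<open>(f\<^sub>* m\<^sub>X)(C) \<le> m\<^sub>Y(C)\<close> for closed \<open>C\<close>; by inner regularity \<open>f\<^sub>* m\<^sub>X = m\<^sub>Y\<close>, and an isometric
  push-forward maps the support of \<open>m\<^sub>X\<close> onto that of \<open>m\<^sub>Y\<close>.\<close>

section \<open>Supports\<close>

lemma mm_space_space: "mm_space M \<Longrightarrow> space M = UNIV"
  by (metis mm_space_def sets_eq_imp_space_eq space_borel)

lemma closed_mm_support: "closed (mm_support M)"
proof -
  have "open (- mm_support M)"
  proof (rule topological_space_class.openI)
    fix x assume "x \<in> - mm_support M"
    then obtain U where U: "open U" "x \<in> U" "\<not> emeasure M U > 0"
      unfolding mm_support_def by blast
    then have "U \<subseteq> - mm_support M" unfolding mm_support_def by blast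
    with U show "\<exists>T. open T \<and> x \<in> T \<and> T \<subseteq> - mm_support M" by blast
  qed
  then show ?thesis by (simp add: closed_def)
qed

text \<open>The complement of the support is covered by the countably many null sets of a countable basis.\<close>
lemma Compl_mm_support_null:
  fixes M :: "'a::second_countable_topology measure"
  assumes M: "sets M = sets borel"
  shows "- mm_support M \<in> null_sets M"
proof -
  obtain B :: "'a set set" where B: "countable B" "topological_basis B"
    using ex_countable_basis by blast
  define N where "N = {b\<in>B. emeasure M b = 0}"
  have "(\<Union>b\<in>N. b) \<in> null_sets M"
  proof (rule null_sets_UN')
    show "countable N" using B(1) unfolding N_def by simp
    fix b assume "b \<in> N"
    then show "b \<in> null_sets M"
      using topological_basis_open[OF B(2)] M unfolding N_def by auto
  qed
  moreover have "- mm_support M \<subseteq> (\<Union>b\<in>N. b)"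
  proof
    fix x assume "x \<in> - mm_support M"
    then obtain U where U: "open U" "x \<in> U" "\<not> emeasure M U > 0"
      unfolding mm_support_def by blast
    obtain b where b: "b \<in> B" "x \<in> b" "b \<subseteq> U"
      using topological_basisE[OF B(2) U(1) U(2)] by blast
    have "emeasure M b \<le> emeasure M U"
      using U(1) M by (intro emeasure_mono[OF b(3)]) auto
    with U(3) b show "x \<in> (\<Union>b\<in>N. b)" unfolding N_def by auto
  qed
  moreover have "- mm_support M \<in> sets M"
    using closed_mm_support[of M] M by (auto intro: borel_open simp: open_Compl)
  ultimately show ?thesis
    by (meson null_sets_subset)
qed

lemma emeasure_Int_mm_support:
  fixes M :: "'a::second_countable_topology measure"
  assumes "sets M = sets borel" and "A \<in> sets M"
  shows "emeasure M (A \<inter> mm_support M) = emeasure M A"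
proof -
  have "A \<inter> mm_support M = A - (- mm_support M)" by blast
  then show ?thesis
    using emeasure_Diff_null_set[OF Compl_mm_support_null[OF assms(1)] assms(2)] by simp
qed

lemma emeasure_distr_Int_mm_support:
  fixes M :: "'a::second_countable_topology measure" and f :: "'a \<Rightarrow> 'b::topological_space"
  assumes sets: "sets M = sets borel" and meas: "f \<in> borel_measurable borel" and "B \<in> sets borel"
  shows "emeasure (distr M borel f) B = emeasure M (f -` B \<inter> mm_support M)"
proof -
  have meas_M: "f \<in> measurable M borel" using meas measurable_cong_sets[OF sets refl] by blast
  have "f -` B \<in> sets M" using measurable_sets_borel[OF meas \<open>B \<in> sets borel\<close>] sets by simp
  then show ?thesis
    using emeasure_distr[OF meas_M \<open>B \<in> sets borel\<close>] emeasure_Int_mm_support[OF sets, of "f -` B"]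
    by (simp add: sets_eq_imp_space_eq[OF sets])
qed

lemma mm_support_nonempty:
  fixes M :: "'a::second_countable_topology measure"
  assumes "prob_space M" and "sets M = sets borel"
  shows "mm_support M \<noteq> {}"
proof -
  have "emeasure M (UNIV \<inter> mm_support M) = 1"
    using emeasure_Int_mm_support[OF assms(2), of UNIV] assms
    by (metis prob_space.emeasure_space_1 sets.top sets_eq_imp_space_eq space_borel)
  then show ?thesis by auto
qed

lemma measure_ball_mm_support_pos:
  assumes "finite_measure M" and "x \<in> mm_support M" and "r > 0"
  shows "measure M (ball x r) > 0"
  using assms finite_measure.emeasure_eq_measure[OF assms(1)]
  unfolding mm_support_def by (simp add: zero_less_measure_iff)

lemma dense_seq_in_mm_support:
  fixes M :: "'a::polish_space measure"
  assumes "prob_space M" and "sets M = sets borel"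
  obtains x :: "nat \<Rightarrow> 'a" where "range x \<subseteq> mm_support M" and "mm_support M \<subseteq> closure (range x)"
proof -
  obtain D where D: "countable D" "D \<subseteq> mm_support M" "mm_support M \<subseteq> closure D"
    using separable by blast
  then have "D \<noteq> {}" using mm_support_nonempty[OF assms] by auto
  then have "range (from_nat_into D) = D" using D(1) by (rule range_from_nat_into)
  with D show ?thesis by (intro that[of "from_nat_into D"]) simp_all
qed

section \<open>Couplings\<close>

lemma pair_measure_in_couplings:
  fixes mX :: "'a::polish_space measure" and mY :: "'b::polish_space measure"
  assumes X: "mm_space mX" and Y: "mm_space mY"
  shows "mX \<Otimes>\<^sub>M mY \<in> couplings mX mY"
proof -
  interpret PX: prob_space mX using X by (simp add: mm_space_def)
  interpret PY: prob_space mY using Y by (simp add: mm_space_def)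
  interpret P: pair_prob_space mX mY by unfold_locales
  have sX: "sets mX = sets borel" and sY: "sets mY = sets borel"
    using X Y by (auto simp: mm_space_def)
  have sets: "sets (mX \<Otimes>\<^sub>M mY) = sets (borel :: ('a \<times> 'b) measure)"
    using sets_pair_measure_cong[OF sX sY] borel_prod by metis
  have "distr (mX \<Otimes>\<^sub>M mY) borel fst = distr (mX \<Otimes>\<^sub>M mY) mX fst"
    by (rule distr_cong) (auto simp: sX)
  also have "\<dots> = mX" by (rule PY.distr_pair_fst)
  finally have fst: "distr (mX \<Otimes>\<^sub>M mY) borel fst = mX" .
  have snd: "distr (mX \<Otimes>\<^sub>M mY) borel snd = mY"
  proof (rule measure_eqI)
    fix A assume "A \<in> sets (distr (mX \<Otimes>\<^sub>M mY) borel snd)"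
    then have A: "A \<in> sets mY" by (simp add: sY)
    have "snd -` A \<inter> space (mX \<Otimes>\<^sub>M mY) = space mX \<times> A"
      using mm_space_space[OF X] mm_space_space[OF Y] by (auto simp: space_pair_measure)
    then have "emeasure (distr (mX \<Otimes>\<^sub>M mY) borel snd) A = emeasure (mX \<Otimes>\<^sub>M mY) (space mX \<times> A)"
      using A sY by (simp add: emeasure_distr)
    also have "\<dots> = emeasure mY A"
      using A by (simp add: PY.emeasure_pair_measure_Times PX.emeasure_space_1)
    finally show "emeasure (distr (mX \<Otimes>\<^sub>M mY) borel snd) A = emeasure mY A" .
  qed (simp add: sY)
  show ?thesis unfolding couplings_def
    using sets fst snd P.prob_space_axioms by blast
qed

lemma d_Eur_zero_imp_coupling:
  fixes mX :: "'a::polish_space measure" and mY :: "'b::polish_space measure"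
  assumes X: "mm_space mX" and Y: "mm_space mY" and E: "d_Eur mX mY = 0" and "\<tau> > 0"
  obtains \<pi> e where "\<pi> \<in> couplings mX mY" "e < \<tau>" "measure (\<pi> \<Otimes>\<^sub>M \<pi>) (dist_gap_set e) < \<tau>"
proof -
  define G where "G \<pi> = (INF e\<in>{0..}. max e (measure (\<pi> \<Otimes>\<^sub>M \<pi>) (dist_gap_set e)))"
    for \<pi> :: "('a \<times> 'b) measure"
  have bdd: "bdd_below ((\<lambda>e. max e (measure (\<pi> \<Otimes>\<^sub>M \<pi>) (dist_gap_set e))) ` {0..})"
    for \<pi> :: "('a \<times> 'b) measure"
    by (rule bdd_belowI[of _ 0]) auto
  have "G \<pi> \<ge> 0" for \<pi>
    unfolding G_def by (rule cINF_greatest) auto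
  moreover have "(INF \<pi>\<in>couplings mX mY. G \<pi>) < \<tau>"
    using E \<open>\<tau> > 0\<close> unfolding d_Eur_def G_def by simp
  moreover have "couplings mX mY \<noteq> {}" using pair_measure_in_couplings[OF X Y] by blast
  ultimately obtain \<pi> where "\<pi> \<in> couplings mX mY" "G \<pi> < \<tau>"
    using cINF_less_iff by (metis bdd_belowI2)
  moreover from this(2) obtain e where "e \<ge> 0" "max e (measure (\<pi> \<Otimes>\<^sub>M \<pi>) (dist_gap_set e)) < \<tau>"
    unfolding G_def using cINF_less_iff[of "{0::real..}", OF _ bdd] by auto
  ultimately show ?thesis using that by auto
qed

lemma couplingsD:
  assumes "\<pi> \<in> couplings mX mY"
  shows "prob_space \<pi>" "sets \<pi> = sets borel" "space \<pi> = UNIV"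
  using assms unfolding couplings_def by (auto dest: sets_eq_imp_space_eq)

lemma measure_coupling_fst:
  assumes "\<pi> \<in> couplings mX mY" and "A \<in> sets borel"
  shows "measure mX A = measure \<pi> (fst -` A)"
proof -
  have "fst \<in> measurable \<pi> borel"
    by (subst measurable_cong_sets[OF couplingsD(2)[OF assms(1)] refl])
      (intro borel_measurable_continuous_onI continuous_intros)
  then have "measure (distr \<pi> borel fst) A = measure \<pi> (fst -` A)"
    using measure_distr[OF _ assms(2), of fst \<pi>] couplingsD(3)[OF assms(1)] by simp
  then show ?thesis using assms(1) unfolding couplings_def by auto
qed

lemma measure_coupling_snd:
  assumes "\<pi> \<in> couplings mX mY" and "A \<in> sets borel"
  shows "measure mY A = measure \<pi> (snd -` A)"
proof -
  have "snd \<in> measurable \<pi> borel"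
    by (subst measurable_cong_sets[OF couplingsD(2)[OF assms(1)] refl])
      (intro borel_measurable_continuous_onI continuous_intros)
  then have "measure (distr \<pi> borel snd) A = measure \<pi> (snd -` A)"
    using measure_distr[OF _ assms(2), of snd \<pi>] couplingsD(3)[OF assms(1)] by simp
  then show ?thesis using assms(1) unfolding couplings_def by auto
qed

definition gap_section :: "real \<Rightarrow> 'a::metric_space \<times> 'b::metric_space \<Rightarrow> ('a \<times> 'b) set" where
  "gap_section e p = {q. e < \<bar>dist (fst p) (fst q) - dist (snd p) (snd q)\<bar>}"

lemma open_gap_section: "open (gap_section e p)"
  unfolding gap_section_def by (intro open_Collect_less continuous_intros)

lemma emeasure_dist_gap_set_eq_nn_integral:
  fixes \<pi> :: "('a::{metric_space, second_countable_topology} \<times> 'b::{metric_space, second_countable_topology}) measure"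
  assumes "prob_space \<pi>" and sets: "sets \<pi> = sets borel"
  shows "emeasure (\<pi> \<Otimes>\<^sub>M \<pi>) (dist_gap_set e) = (\<integral>\<^sup>+p. emeasure \<pi> (gap_section e p) \<partial>\<pi>)"
proof -
  interpret prob_space \<pi> by fact
  have "open (dist_gap_set e :: (('a \<times> 'b) \<times> ('a \<times> 'b)) set)"
  proof -
    have "dist_gap_set e = {z :: ('a \<times> 'b) \<times> ('a \<times> 'b).
        e < \<bar>dist (fst (fst z)) (fst (snd z)) - dist (snd (fst z)) (snd (snd z))\<bar>}"
      unfolding dist_gap_set_def by auto
    then show ?thesis by (simp only:) (intro open_Collect_less continuous_intros)
  qed
  moreover have "sets (\<pi> \<Otimes>\<^sub>M \<pi>) = sets (borel :: (('a \<times> 'b) \<times> ('a \<times> 'b)) measure)"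
    using sets_pair_measure_cong[OF sets sets] borel_prod by metis
  ultimately have "dist_gap_set e \<in> sets (\<pi> \<Otimes>\<^sub>M \<pi>)" by simp
  moreover have "Pair p -` dist_gap_set e = gap_section e p" for p :: "'a \<times> 'b"
    unfolding dist_gap_set_def gap_section_def by auto
  ultimately show ?thesis by (simp add: emeasure_pair_measure_alt)
qed

text \<open>Markov's inequality for the section measures, whose integral is the mass of the gap set.\<close>
lemma exists_small_gap_section:
  fixes \<pi> :: "('a::{metric_space, second_countable_topology} \<times> 'b::{metric_space, second_countable_topology}) measure"
  assumes "prob_space \<pi>" and sets: "sets \<pi> = sets borel" and A: "A \<in> sets borel" and "t \<ge> 0"
    and small: "measure (\<pi> \<Otimes>\<^sub>M \<pi>) (dist_gap_set e) < t * measure \<pi> A"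
  obtains q where "q \<in> A" "measure \<pi> (gap_section e q) \<le> t"
proof -
  interpret prob_space \<pi> by fact
  interpret P: pair_prob_space \<pi> \<pi> by unfold_locales
  have "\<exists>q\<in>A. measure \<pi> (gap_section e q) \<le> t"
  proof (rule ccontr)
    assume "\<not> ?thesis"
    then have big: "ennreal t < emeasure \<pi> (gap_section e q)" if "q \<in> A" for q
      using that \<open>t \<ge> 0\<close> by (auto simp: emeasure_eq_measure ennreal_lessI not_le)
    have "ennreal (t * measure \<pi> A) = (\<integral>\<^sup>+q. ennreal t * indicator A q \<partial>\<pi>)"
      using A sets \<open>t \<ge> 0\<close> by (simp add: nn_integral_cmult_indicator emeasure_eq_measure ennreal_mult)
    also have "\<dots> \<le> (\<integral>\<^sup>+q. emeasure \<pi> (gap_section e q) \<partial>\<pi>)"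
      by (intro nn_integral_mono) (use big less_imp_le in \<open>auto split: split_indicator\<close>)
    also have "\<dots> = ennreal (measure (\<pi> \<Otimes>\<^sub>M \<pi>) (dist_gap_set e))"
      using emeasure_dist_gap_set_eq_nn_integral[OF \<open>prob_space \<pi>\<close> sets] P.emeasure_eq_measure by simp
    finally have "t * measure \<pi> A \<le> measure (\<pi> \<Otimes>\<^sub>M \<pi>) (dist_gap_set e)"
      by simp
    with small show False by simp
  qed
  then show ?thesis using that by blast
qed

lemma dist_distortion_via_common_point:
  assumes "q \<notin> gap_section e p" and "q \<notin> gap_section e p'"
  shows "\<bar>dist (fst p) (fst p') - dist (snd p) (snd p')\<bar> \<le> 2 * e + 2 * dist (fst p') (fst q)"
proof -
  have "\<bar>dist (fst p) (fst q) - dist (snd p) (snd q)\<bar> \<le> e"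
    and "\<bar>dist (fst p') (fst q) - dist (snd p') (snd q)\<bar> \<le> e"
    using assms unfolding gap_section_def by auto
  moreover have "dist (fst p) (fst p') \<le> dist (fst p) (fst q) + dist (fst p') (fst q)"
    and "dist (fst p) (fst q) \<le> dist (fst p) (fst p') + dist (fst p') (fst q)"
    and "dist (snd p) (snd p') \<le> dist (snd p) (snd q) + dist (snd p') (snd q)"
    and "dist (snd p) (snd q) \<le> dist (snd p) (snd p') + dist (snd p') (snd q)"
    by metric+
  ultimately show ?thesis by (simp add: abs_le_iff)
qed

lemma dist_distortion_of_small_gap_sections:
  fixes \<pi> :: "('a::{metric_space, second_countable_topology} \<times> 'b::{metric_space, second_countable_topology}) measure"
  assumes "prob_space \<pi>" and sets: "sets \<pi> = sets borel" and "dist z (fst p') < r"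
    and mass: "measure \<pi> (gap_section e p) + measure \<pi> (gap_section e p') < measure \<pi> (fst -` ball z r)"
  shows "\<bar>dist (fst p) (fst p') - dist (snd p) (snd p')\<bar> \<le> 2 * e + 4 * r"
proof -
  interpret prob_space \<pi> by fact
  have sec: "gap_section e q \<in> sets \<pi>" for q
    using sets open_gap_section[of e q] by simp
  have "\<not> fst -` ball z r \<subseteq> gap_section e p \<union> gap_section e p'"
  proof
    assume "fst -` ball z r \<subseteq> gap_section e p \<union> gap_section e p'"
    then have "measure \<pi> (fst -` ball z r) \<le> measure \<pi> (gap_section e p \<union> gap_section e p')"
      using sec by (intro finite_measure_mono) auto
    also have "\<dots> \<le> measure \<pi> (gap_section e p) + measure \<pi> (gap_section e p')"
      using sec[of p] sec[of p'] by (rule measure_Un_le)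
    finally show False using mass by linarith
  qed
  then obtain q where "q \<in> fst -` ball z r" "q \<notin> gap_section e p" "q \<notin> gap_section e p'"
    by blast
  moreover have "dist (fst p') (fst q) \<le> dist z (fst p') + dist z (fst q)" by metric
  ultimately show ?thesis
    using dist_distortion_via_common_point[of q e p p'] \<open>dist z (fst p') < r\<close> by simp
qed

section \<open>Approximating finite configurations\<close>

definition ball_mass_transfer ::
  "'a::metric_space measure \<Rightarrow> 'b::metric_space measure \<Rightarrow> (nat \<Rightarrow> 'a) \<Rightarrow> (nat \<Rightarrow> 'b) \<Rightarrow> nat \<Rightarrow> real \<Rightarrow> bool"
where
  "ball_mass_transfer mX mY x y n \<delta> \<longleftrightarrow> (\<forall>I\<subseteq>{..<n}. \<forall>\<rho>>0.
     measure mX (\<Union>i\<in>I. ball (x i) \<rho>) \<le> measure mY (\<Union>i\<in>I. cball (y i) (\<rho> + \<delta>)) + \<delta>)"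

lemma ball_mass_transferD:
  assumes "ball_mass_transfer mX mY x y n \<delta>" and "i < n" and "\<rho> > 0"
  shows "measure mX (ball (x i) \<rho>) \<le> measure mY (cball (y i) (\<rho> + \<delta>)) + \<delta>"
  using assms(1)[unfolded ball_mass_transfer_def, rule_format, of "{i}" \<rho>] assms(2,3) by simp

lemma ball_mass_transfer_coupling:
  fixes mX :: "'a::polish_space measure" and mY :: "'b::polish_space measure"
  assumes \<pi>: "\<pi> \<in> couplings mX mY"
    and near: "\<And>i. i < n \<Longrightarrow> dist (x i) (fst (p i)) < r"
    and small: "\<And>i. i < n \<Longrightarrow> measure \<pi> (gap_section e (p i)) \<le> t"
    and "e + r \<le> \<delta>" and "0 \<le> t" and "real n * t \<le> \<delta>"
  shows "ball_mass_transfer mX mY x (snd \<circ> p) n \<delta>"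
  unfolding ball_mass_transfer_def
proof (intro allI impI)
  fix I and \<rho> :: real assume I: "I \<subseteq> {..<n}" and "\<rho> > 0"
  interpret prob_space \<pi> using couplingsD(1)[OF \<pi>] .
  have sets: "B \<in> sets \<pi>" if "B \<in> sets borel" for B using that couplingsD(2)[OF \<pi>] by simp
  have "finite I" using I finite_subset by blast
  define U where "U = (\<Union>i\<in>I. ball (x i) \<rho>)"
  define V where "V = (\<Union>i\<in>I. cball (snd (p i)) (\<rho> + \<delta>))"
  define S where "S = (\<Union>i\<in>I. gap_section e (p i))"
  have "closed V" unfolding V_def using \<open>finite I\<close> by (intro closed_UN) auto
  then have "closed (snd -` V)" by (intro closed_vimage) (auto intro: continuous_intros)
  then have snd_V: "snd -` V \<in> sets \<pi>" by (intro sets borel_closed)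
  have "open S" unfolding S_def by (intro open_UN ballI open_gap_section)
  then have S: "S \<in> sets \<pi>" by (intro sets borel_open)
  have cover: "fst -` U \<subseteq> snd -` V \<union> S"
  proof
    fix z :: "'a \<times> 'b" assume "z \<in> fst -` U"
    then obtain i where i: "i \<in> I" "dist (x i) (fst z) < \<rho>" unfolding U_def by auto
    have "dist (fst (p i)) (fst z) \<le> dist (x i) (fst (p i)) + dist (x i) (fst z)" by metric
    then have "dist (snd (p i)) (snd z) \<le> \<rho> + \<delta> \<or> z \<in> gap_section e (p i)"
      using near[of i] i I \<open>e + r \<le> \<delta>\<close> unfolding gap_section_def by auto
    then show "z \<in> snd -` V \<union> S" using i unfolding V_def S_def by auto
  qed
  have "measure \<pi> S \<le> (\<Sum>i\<in>I. measure \<pi> (gap_section e (p i)))"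
    unfolding S_def using \<open>finite I\<close>
    by (intro finite_measure_subadditive_finite) (auto intro: sets borel_open open_gap_section)
  also have "\<dots> \<le> real (card I) * t"
    using sum_mono[of I _ "\<lambda>_. t"] small I by (simp add: subset_iff)
  also have "\<dots> \<le> \<delta>"
  proof -
    have "card I \<le> n" using card_mono[OF _ I] by simp
    then show ?thesis
      using \<open>0 \<le> t\<close> \<open>real n * t \<le> \<delta>\<close> by (meson mult_right_mono of_nat_le_iff order_trans)
  qed
  finally have "measure \<pi> S \<le> \<delta>" .
  have "measure mX U = measure \<pi> (fst -` U)"
    unfolding U_def by (intro measure_coupling_fst[OF \<pi>]) auto
  also have "\<dots> \<le> measure \<pi> (snd -` V \<union> S)"
    using cover snd_V S by (intro finite_measure_mono) auto
  also have "\<dots> \<le> measure \<pi> (snd -` V) + measure \<pi> S"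
    using snd_V S by (rule measure_Un_le)
  also have "measure \<pi> (snd -` V) = measure mY V"
    using \<open>closed V\<close> by (intro measure_coupling_snd[OF \<pi>, symmetric]) auto
  finally show "measure mX (\<Union>i\<in>I. ball (x i) \<rho>) \<le> measure mY (\<Union>i\<in>I. cball ((snd \<circ> p) i) (\<rho> + \<delta>)) + \<delta>"
    using \<open>measure \<pi> S \<le> \<delta>\<close> unfolding U_def V_def by simp
qed

lemma coupling_points_with_small_gap_sections:
  fixes mX :: "'a::polish_space measure" and mY :: "'b::polish_space measure"
  assumes \<pi>: "\<pi> \<in> couplings mX mY" and "t \<ge> 0"
    and gap: "\<And>i. i < n \<Longrightarrow> measure (\<pi> \<Otimes>\<^sub>M \<pi>) (dist_gap_set e) < t * measure mX (ball (x i) r)"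
  obtains p where "\<And>i. i < n \<Longrightarrow> dist (x i) (fst (p i)) < r"
    and "\<And>i. i < n \<Longrightarrow> measure \<pi> (gap_section e (p i)) \<le> t"
proof -
  have "\<exists>q. fst q \<in> ball (x i) r \<and> measure \<pi> (gap_section e q) \<le> t" if "i < n" for i
  proof -
    have "fst -` ball (x i) r \<in> sets borel"
      by (intro borel_open open_vimage_fst open_ball)
    moreover have "measure (\<pi> \<Otimes>\<^sub>M \<pi>) (dist_gap_set e) < t * measure \<pi> (fst -` ball (x i) r)"
      using gap[OF that] measure_coupling_fst[OF \<pi>, of "ball (x i) r"] by simp
    ultimately obtain q where "q \<in> fst -` ball (x i) r" "measure \<pi> (gap_section e q) \<le> t"
      using exists_small_gap_section[OF couplingsD(1,2)[OF \<pi>] _ \<open>t \<ge> 0\<close>] by blast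
    then show ?thesis by blast
  qed
  then show ?thesis using that by (metis mem_ball)
qed

lemma finite_configuration_approx:
  fixes mX :: "'a::polish_space measure" and mY :: "'b::polish_space measure"
  assumes X: "mm_space mX" and Y: "mm_space mY" and E: "d_Eur mX mY = 0" and "\<delta> > 0"
    and xS: "\<And>i. i < n \<Longrightarrow> x i \<in> mm_support mX"
  obtains y where "\<And>i j. i < n \<Longrightarrow> j < n \<Longrightarrow> \<bar>dist (x i) (x j) - dist (y i) (y j)\<bar> \<le> \<delta>"
    and "ball_mass_transfer mX mY x y n \<delta>"
proof -
  interpret PX: prob_space mX using X by (simp add: mm_space_def)
  text \<open>\<open>r\<close> makes the final distortion \<open>2e + 6r\<close> smaller than \<open>\<delta>\<close>; \<open>3t \<le> a\<close> prevents two gap sections from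
    covering an \<open>r\<close>-ball around some \<open>x\<^sub>j\<close>, and \<open>n t \<le> \<delta>\<close> bounds the total mass of all \<open>n\<close> of them.\<close>
  define r where "r = \<delta> / 10"
  define a where "a = Min (insert 1 ((\<lambda>i. measure mX (ball (x i) r)) ` {..<n}))"
  define t where "t = min (a / 3) (\<delta> / (real n + 1))"
  have "r > 0" using \<open>\<delta> > 0\<close> by (simp add: r_def)
  have a_le: "a \<le> measure mX (ball (x i) r)" if "i < n" for i
    unfolding a_def using that by (intro Min_le) auto
  have "a > 0"
    using measure_ball_mm_support_pos[OF PX.finite_measure_axioms xS \<open>r > 0\<close>]
    unfolding a_def by (auto simp: Min_gr_iff)
  then have "t > 0" "3 * t \<le> a" using \<open>\<delta> > 0\<close> by (auto simp: t_def)
  have "real n * t \<le> \<delta>"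
  proof -
    have "t \<le> \<delta> / (real n + 1)" by (simp add: t_def)
    then have "(real n + 1) * t \<le> \<delta>" by (simp add: field_simps)
    then show ?thesis using \<open>t > 0\<close> by (simp add: algebra_simps)
  qed
  have "min r (t * a / 2) > 0" using \<open>r > 0\<close> \<open>t > 0\<close> \<open>a > 0\<close> by simp
  then obtain \<pi> e where \<pi>: "\<pi> \<in> couplings mX mY" and "e < min r (t * a / 2)"
    and gap: "measure (\<pi> \<Otimes>\<^sub>M \<pi>) (dist_gap_set e) < min r (t * a / 2)"
    by (rule d_Eur_zero_imp_coupling[OF X Y E])
  interpret P: prob_space \<pi> using couplingsD(1)[OF \<pi>] .
  have ball_mass: "a \<le> measure \<pi> (fst -` ball (x i) r)" if "i < n" for i
    using a_le[OF that] measure_coupling_fst[OF \<pi>, of "ball (x i) r"] by simp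
  have "measure (\<pi> \<Otimes>\<^sub>M \<pi>) (dist_gap_set e) < t * measure mX (ball (x i) r)" if "i < n" for i
  proof -
    have "t * a \<le> t * measure mX (ball (x i) r)" using a_le[OF that] \<open>t > 0\<close> by simp
    moreover have "t * a / 2 < t * a" using \<open>t > 0\<close> \<open>a > 0\<close> by simp
    ultimately show ?thesis using gap by linarith
  qed
  then obtain p where near: "\<And>i. i < n \<Longrightarrow> dist (x i) (fst (p i)) < r"
    and small: "\<And>i. i < n \<Longrightarrow> measure \<pi> (gap_section e (p i)) \<le> t"
    using coupling_points_with_small_gap_sections[OF \<pi>] \<open>t > 0\<close> by (metis less_imp_le)
  show ?thesis
  proof
    fix i j assume "i < n" "j < n"
    have "measure \<pi> (gap_section e (p i)) + measure \<pi> (gap_section e (p j)) < measure \<pi> (fst -` ball (x j) r)"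
      using small[OF \<open>i < n\<close>] small[OF \<open>j < n\<close>] ball_mass[OF \<open>j < n\<close>] \<open>3 * t \<le> a\<close> \<open>t > 0\<close> by linarith
    then have "\<bar>dist (fst (p i)) (fst (p j)) - dist (snd (p i)) (snd (p j))\<bar> \<le> 2 * e + 4 * r"
      using near[OF \<open>j < n\<close>]
      by (intro dist_distortion_of_small_gap_sections[OF P.prob_space_axioms couplingsD(2)[OF \<pi>]])
    moreover have "dist (x i) (x j) \<le> dist (x i) (fst (p i)) + dist (fst (p i)) (fst (p j)) + dist (x j) (fst (p j))"
      and "dist (fst (p i)) (fst (p j)) \<le> dist (x i) (fst (p i)) + dist (x i) (x j) + dist (x j) (fst (p j))"
      by metric+
    ultimately show "\<bar>dist (x i) (x j) - dist ((snd \<circ> p) i) ((snd \<circ> p) j)\<bar> \<le> \<delta>"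
      using near[OF \<open>i < n\<close>] near[OF \<open>j < n\<close>] \<open>e < min r (t * a / 2)\<close>
      unfolding r_def abs_le_iff by auto
  next
    show "ball_mass_transfer mX mY x (snd \<circ> p) n \<delta>"
      using \<open>e < min r (t * a / 2)\<close> \<open>t > 0\<close> \<open>real n * t \<le> \<delta>\<close> \<open>\<delta> > 0\<close>
      by (intro ball_mass_transfer_coupling[OF \<pi> near small]) (auto simp: r_def)
  qed
qed

section \<open>Compactness of the approximating configurations\<close>

text \<open>A compact set \<open>K\<close> of mass \<open>> 1 - a\<close> meets every ball of mass \<open>\<ge> a\<close>, so the centres of such
  balls lie within \<open>2\<rho>\<close> of a finite \<open>\<rho>\<close>-net of \<open>K\<close>.\<close>
lemma finite_net_for_balls_of_large_mass:
  fixes M :: "'a::polish_space measure"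
  assumes "prob_space M" and sets: "sets M = sets borel" and "\<rho> > 0" and "a > 0"
  obtains F where "finite F" and "\<And>w. a \<le> measure M (cball w \<rho>) \<Longrightarrow> \<exists>z\<in>F. dist z w < 2 * \<rho>"
proof -
  interpret prob_space M by fact
  have "emeasure M UNIV = (SUP K\<in>{K. compact K}. emeasure M K)"
    using inner_regular[OF sets, of UNIV] sets_eq_imp_space_eq[OF sets] by simp
  moreover have "ennreal (1 - a) < emeasure M UNIV"
    using \<open>a > 0\<close> emeasure_space_1 sets_eq_imp_space_eq[OF sets] by (simp add: ennreal_lessI)
  ultimately obtain K where "compact K" and K_mass: "ennreal (1 - a) < emeasure M K"
    by (auto simp: less_SUP_iff)
  have "1 - a < measure M K"
  proof (cases "1 - a \<ge> 0")
    case True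
    then show ?thesis using K_mass by (simp add: emeasure_eq_measure ennreal_less_iff)
  qed (use measure_nonneg[of M K] in linarith)
  obtain F where "finite F" and F: "K \<subseteq> (\<Union>z\<in>F. ball z \<rho>)"
    using \<open>compact K\<close> \<open>\<rho> > 0\<close> unfolding compact_eq_totally_bounded by blast
  have "\<exists>z\<in>F. dist z w < 2 * \<rho>" if "a \<le> measure M (cball w \<rho>)" for w
  proof -
    have "cball w \<rho> \<inter> K \<noteq> {}"
    proof
      assume "cball w \<rho> \<inter> K = {}"
      then have "measure M (cball w \<rho> \<union> K) = measure M (cball w \<rho>) + measure M K"
        using sets \<open>compact K\<close> by (intro finite_measure_Union) (auto intro: borel_closed compact_imp_closed)
      then show False
        using that \<open>1 - a < measure M K\<close> prob_le_1[of "cball w \<rho> \<union> K"] by linarith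
    qed
    then obtain u where "dist w u \<le> \<rho>" "u \<in> K" by auto
    moreover from this(2) obtain z where "z \<in> F" "dist z u < \<rho>" using F by auto
    moreover have "dist z w \<le> dist z u + dist w u" by metric
    ultimately show ?thesis by (intro bexI[of _ z]) auto
  qed
  with \<open>finite F\<close> show ?thesis by (rule that)
qed

lemma compact_closure_range_if_ball_mass_bounded_below:
  fixes M :: "'a::polish_space measure" and w :: "nat \<Rightarrow> 'a"
  assumes "prob_space M" and "sets M = sets borel"
    and mass: "\<And>\<rho>. \<rho> > 0 \<Longrightarrow> \<exists>a>0. \<forall>\<^sub>F k in sequentially. a \<le> measure M (cball (w k) \<rho>)"
  shows "compact (closure (range w))"
proof -
  have "\<exists>F. finite F \<and> closure (range w) \<subseteq> (\<Union>z\<in>F. ball z \<epsilon>)" if "\<epsilon> > 0" for \<epsilon>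
  proof -
    define \<rho> where "\<rho> = \<epsilon> / 4"
    have "\<rho> > 0" using \<open>\<epsilon> > 0\<close> by (simp add: \<rho>_def)
    then obtain a k0 where "a > 0" and a: "\<And>k. k \<ge> k0 \<Longrightarrow> a \<le> measure M (cball (w k) \<rho>)"
      using mass unfolding eventually_sequentially by blast
    obtain F where "finite F" and near: "\<And>w. a \<le> measure M (cball w \<rho>) \<Longrightarrow> \<exists>z\<in>F. dist z w < 2 * \<rho>"
      using finite_net_for_balls_of_large_mass[OF assms(1,2) \<open>\<rho> > 0\<close> \<open>a > 0\<close>] by blast
    have "closure (range w) \<subseteq> (\<Union>z\<in>F \<union> w ` {..<k0}. ball z \<epsilon>)"
    proof
      fix v assume "v \<in> closure (range w)"
      then obtain k where k: "dist (w k) v < \<rho>" using \<open>\<rho> > 0\<close> by (metis closure_approachable rangeE)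
      show "v \<in> (\<Union>z\<in>F \<union> w ` {..<k0}. ball z \<epsilon>)"
      proof (cases "k < k0")
        case True
        then have "w k \<in> F \<union> w ` {..<k0}" by simp
        moreover have "v \<in> ball (w k) \<epsilon>" using k \<open>\<epsilon> > 0\<close> unfolding \<rho>_def mem_ball by linarith
        ultimately show ?thesis by (rule UN_I)
      next
        case False
        then obtain z where "z \<in> F" "dist z (w k) < 2 * \<rho>" using near a by (meson not_le)
        moreover have "dist z v \<le> dist z (w k) + dist (w k) v" by metric
        ultimately have "dist z v < \<epsilon>" using k \<open>\<epsilon> > 0\<close> unfolding \<rho>_def by linarith
        with \<open>z \<in> F\<close> show ?thesis by (intro UN_I[of z]) auto
      qed
    qed
    moreover have "finite (F \<union> w ` {..<k0})" using \<open>finite F\<close> by simp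
    ultimately show ?thesis by blast
  qed
  moreover have "uniform_space_class.complete (closure (range w))"
    using complete_eq_closed[of "closure (range w)"] by simp
  ultimately show ?thesis
    unfolding compact_eq_totally_bounded by blast
qed

lemma diagonal_convergent_subseq:
  fixes Y :: "nat \<Rightarrow> nat \<Rightarrow> 'b::metric_space"
  assumes "\<And>i. compact (closure (range (\<lambda>k. Y k i)))"
  obtains \<sigma> g where "strict_mono \<sigma>" and "\<And>i. (\<lambda>m. Y (\<sigma> m) i) \<longlonglongrightarrow> g i"
proof -
  define P where "P i s \<longleftrightarrow> (\<exists>l. (\<lambda>m. Y (s m) i) \<longlonglongrightarrow> l)" for i and s :: "nat \<Rightarrow> nat"
  interpret subseqs P
  proof
    fix i and s :: "nat \<Rightarrow> nat"
    have "seq_compact (closure (range (\<lambda>k. Y k i)))"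
      using assms[of i] by (rule compact_imp_seq_compact)
    moreover have "\<forall>m. Y (s m) i \<in> closure (range (\<lambda>k. Y k i))"
      by (intro allI closure_subset[THEN subsetD] rangeI)
    ultimately obtain l r where "strict_mono r" "((\<lambda>m. Y (s m) i) \<circ> r) \<longlonglongrightarrow> l"
      by (rule seq_compactE)
    then show "\<exists>r. strict_mono r \<and> P i (s \<circ> r)"
      unfolding P_def comp_def by blast
  qed
  have "P i (diagseq \<circ> (+) (Suc i))" for i
  proof (rule diagseq_holds)
    fix r s n assume "strict_mono (r :: nat \<Rightarrow> nat)" "P n s"
    then obtain l where "((\<lambda>m. Y (s m) n) \<circ> r) \<longlonglongrightarrow> l"
      unfolding P_def using LIMSEQ_subseq_LIMSEQ by blast
    then show "P n (s \<circ> r)" unfolding P_def comp_def by blast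
  qed
  have "\<exists>l. (\<lambda>m. Y (diagseq m) i) \<longlonglongrightarrow> l" for i
  proof -
    obtain l where "(\<lambda>m. Y ((diagseq \<circ> (+) (Suc i)) m) i) \<longlonglongrightarrow> l"
      using \<open>P i (diagseq \<circ> (+) (Suc i))\<close> unfolding P_def by blast
    moreover have "(\<lambda>m. Y ((diagseq \<circ> (+) (Suc i)) m) i) = (\<lambda>m. Y (diagseq (m + Suc i)) i)"
      by (rule ext) (simp add: add.commute)
    ultimately have "(\<lambda>m. Y (diagseq (m + Suc i)) i) \<longlonglongrightarrow> l" by simp
    then have "(\<lambda>m. Y (diagseq m) i) \<longlonglongrightarrow> l" by (rule LIMSEQ_offset)
    then show ?thesis ..
  qed
  then obtain g where "\<And>i. (\<lambda>m. Y (diagseq m) i) \<longlonglongrightarrow> g i" by metis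
  with subseq_diagseq show ?thesis by (rule that)
qed

section \<open>The limit isometry\<close>

lemma isometric_extension_to_closure:
  fixes x :: "nat \<Rightarrow> 'a::metric_space" and g :: "nat \<Rightarrow> 'b::complete_space"
  assumes iso: "\<And>i j. dist (g i) (g j) = dist (x i) (x j)"
  obtains F where "\<And>u v. u \<in> closure (range x) \<Longrightarrow> v \<in> closure (range x) \<Longrightarrow> dist (F u) (F v) = dist u v"
    and "\<And>i. F (x i) = g i"
proof -
  define f where "f z = g (SOME i. x i = z)" for z
  have f: "f (x i) = g i" for i
  proof -
    have "x (SOME j. x j = x i) = x i" by (rule someI) (rule refl)
    then show ?thesis using iso[of "SOME j. x j = x i" i] unfolding f_def by simp
  qed
  have "uniformly_continuous_on (range x) f"
    unfolding uniformly_continuous_on_def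
  proof (intro allI impI)
    fix e :: real assume "e > 0"
    then show "\<exists>d>0. \<forall>u\<in>range x. \<forall>v\<in>range x. dist v u < d \<longrightarrow> dist (f v) (f u) < e"
      using iso f by (intro exI[of _ e]) auto
  qed
  then obtain F where F: "uniformly_continuous_on (closure (range x)) F"
    and ext: "\<And>z. z \<in> range x \<Longrightarrow> f z = F z"
    using uniformly_continuous_on_extension_on_closure[OF \<open>uniformly_continuous_on (range x) f\<close>]
    by metis
  have Fx: "F (x i) = g i" for i using ext[of "x i"] f by simp
  have F_iso: "dist (F u) (F v) = dist u v"
    if uv: "u \<in> closure (range x)" "v \<in> closure (range x)" for u v
  proof -
    define h where "h z = dist (F (fst z)) (F (snd z)) - dist (fst z) (snd z)" for z
    have F_cont: "continuous_on (closure (range x)) F"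
      using F by (rule uniformly_continuous_imp_continuous)
    have "continuous_on (closure (range x) \<times> closure (range x)) (\<lambda>z. F (fst z))"
      by (rule continuous_on_compose2[OF F_cont continuous_on_fst[OF continuous_on_id]]) auto
    moreover have "continuous_on (closure (range x) \<times> closure (range x)) (\<lambda>z. F (snd z))"
      by (rule continuous_on_compose2[OF F_cont continuous_on_snd[OF continuous_on_id]]) auto
    ultimately
    have "continuous_on (closure (range x \<times> range x)) h"
      unfolding h_def closure_Times by (intro continuous_intros)
    moreover have "h z = 0" if z: "z \<in> range x \<times> range x" for z
    proof -
      obtain i j where "z = (x i, x j)" using z by auto
      then show ?thesis using iso[of i j] unfolding h_def by (simp add: Fx)
    qed
    moreover have "(u, v) \<in> closure (range x \<times> range x)"
      using uv by (simp add: closure_Times)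
    ultimately have "h (u, v) = 0"
      by (rule continuous_constant_on_closure)
    then show ?thesis unfolding h_def by simp
  qed
  show ?thesis by (rule that[OF F_iso Fx])
qed

definition ball_mass_transfer_limit ::
  "'a::metric_space measure \<Rightarrow> 'b::metric_space measure \<Rightarrow> (nat \<Rightarrow> 'a) \<Rightarrow> (nat \<Rightarrow> 'b) \<Rightarrow> bool"
where
  "ball_mass_transfer_limit mX mY x g \<longleftrightarrow> (\<exists>y \<sigma>. strict_mono \<sigma> \<and> (\<forall>i. (\<lambda>m. y (\<sigma> m) i) \<longlonglongrightarrow> g i) \<and>
     (\<forall>k. ball_mass_transfer mX mY x (y k) k (inverse (real (Suc k)))))"

lemma compact_closure_range_of_ball_mass_transfers:
  fixes mX :: "'a::polish_space measure" and mY :: "'b::polish_space measure"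
  assumes X: "mm_space mX" and Y: "mm_space mY" and "x i \<in> mm_support mX"
    and transfer: "\<And>k. ball_mass_transfer mX mY x (y k) k (inverse (real (Suc k)))"
  shows "compact (closure (range (\<lambda>k. y k i)))"
proof (rule compact_closure_range_if_ball_mass_bounded_below)
  interpret PX: prob_space mX using X by (simp add: mm_space_def)
  interpret PY: prob_space mY using Y by (simp add: mm_space_def)
  show "prob_space mY" and sY: "sets mY = sets borel" using Y by (simp_all add: mm_space_def)
  fix \<rho> :: real assume "\<rho> > 0"
  define a where "a = measure mX (ball (x i) (\<rho> / 2))"
  have "a > 0"
    unfolding a_def using measure_ball_mm_support_pos[OF PX.finite_measure_axioms \<open>x i \<in> mm_support mX\<close>] \<open>\<rho> > 0\<close>
    by simp
  have "\<forall>\<^sub>F k in sequentially. i < k \<and> inverse (real (Suc k)) < min (\<rho> / 2) (a / 2)"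
    using \<open>\<rho> > 0\<close> \<open>a > 0\<close>
    by (intro eventually_conj eventually_gt_at_top order_tendstoD(2)[OF LIMSEQ_inverse_real_of_nat]) simp
  then have "\<forall>\<^sub>F k in sequentially. a / 2 \<le> measure mY (cball (y k i) \<rho>)"
  proof eventually_elim
    case (elim k)
    then have "a \<le> measure mY (cball (y k i) (\<rho> / 2 + inverse (real (Suc k)))) + inverse (real (Suc k))"
      unfolding a_def using \<open>\<rho> > 0\<close> by (intro ball_mass_transferD[OF transfer]) auto
    moreover have "measure mY (cball (y k i) (\<rho> / 2 + inverse (real (Suc k))))
        \<le> measure mY (cball (y k i) \<rho>)"
      using elim by (intro PY.finite_measure_mono subset_cball) (simp_all add: sY)
    ultimately show ?case using elim by linarith
  qed
  then show "\<exists>a>0. \<forall>\<^sub>F k in sequentially. a \<le> measure mY (cball (y k i) \<rho>)"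
    using \<open>a > 0\<close> by (intro exI[of _ "a / 2"]) simp
qed

lemma dist_eq_if_distortion_vanishes:
  fixes x :: "nat \<Rightarrow> 'a::metric_space" and y :: "nat \<Rightarrow> nat \<Rightarrow> 'b::metric_space"
  assumes "strict_mono \<sigma>" and lim: "\<And>i. (\<lambda>m. y (\<sigma> m) i) \<longlonglongrightarrow> g i"
    and distortion: "\<And>k i j. i < k \<Longrightarrow> j < k \<Longrightarrow>
      \<bar>dist (x i) (x j) - dist (y k i) (y k j)\<bar> \<le> inverse (real (Suc k))"
  shows "dist (g i) (g j) = dist (x i) (x j)"
proof (rule LIMSEQ_unique)
  show "(\<lambda>m. dist (y (\<sigma> m) i) (y (\<sigma> m) j)) \<longlonglongrightarrow> dist (g i) (g j)"
    by (intro tendsto_dist lim)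
  have "\<forall>\<^sub>F m in sequentially. norm (dist (y (\<sigma> m) i) (y (\<sigma> m) j) - dist (x i) (x j)) \<le> inverse (real (Suc m))"
    using eventually_gt_at_top[of "max i j"]
  proof eventually_elim
    case (elim m)
    then have "i < \<sigma> m" "j < \<sigma> m" using seq_suble[OF \<open>strict_mono \<sigma>\<close>, of m] by auto
    then have "\<bar>dist (x i) (x j) - dist (y (\<sigma> m) i) (y (\<sigma> m) j)\<bar> \<le> inverse (real (Suc (\<sigma> m)))"
      by (rule distortion)
    also have "\<dots> \<le> inverse (real (Suc m))"
      using seq_suble[OF \<open>strict_mono \<sigma>\<close>, of m] by (intro le_imp_inverse_le) auto
    finally show ?case by (simp add: abs_minus_commute)
  qed
  then have "(\<lambda>m. dist (y (\<sigma> m) i) (y (\<sigma> m) j) - dist (x i) (x j)) \<longlonglongrightarrow> 0"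
    by (rule Lim_null_comparison) (rule LIMSEQ_inverse_real_of_nat)
  then show "(\<lambda>m. dist (y (\<sigma> m) i) (y (\<sigma> m) j)) \<longlonglongrightarrow> dist (x i) (x j)"
    by (simp add: LIM_zero_iff)
qed

lemma exists_isometric_ball_mass_transfer_limit:
  fixes mX :: "'a::polish_space measure" and mY :: "'b::polish_space measure"
  assumes X: "mm_space mX" and Y: "mm_space mY" and E: "d_Eur mX mY = 0"
    and xS: "\<And>i. x i \<in> mm_support mX"
  obtains g where "\<And>i j. dist (g i) (g j) = dist (x i) (x j)" and "ball_mass_transfer_limit mX mY x g"
proof -
  have "\<exists>y. (\<forall>i<k. \<forall>j<k. \<bar>dist (x i) (x j) - dist (y i) (y j)\<bar> \<le> inverse (real (Suc k))) \<and>
      ball_mass_transfer mX mY x y k (inverse (real (Suc k)))" for k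
    by (rule finite_configuration_approx[OF X Y E, where \<delta> = "inverse (real (Suc k))" and n = k and x = x])
      (auto intro: xS)
  then obtain y where distortion: "\<And>k i j. i < k \<Longrightarrow> j < k \<Longrightarrow>
      \<bar>dist (x i) (x j) - dist (y k i) (y k j)\<bar> \<le> inverse (real (Suc k))"
    and transfer: "\<And>k. ball_mass_transfer mX mY x (y k) k (inverse (real (Suc k)))"
    by metis
  obtain \<sigma> g where "strict_mono \<sigma>" and lim: "\<And>i. (\<lambda>m. y (\<sigma> m) i) \<longlonglongrightarrow> g i"
  proof (rule diagonal_convergent_subseq[of y])
    show "compact (closure (range (\<lambda>k. y k i)))" for i
      by (rule compact_closure_range_of_ball_mass_transfers[OF X Y xS transfer])
  qed (rule that)
  have "dist (g i) (g j) = dist (x i) (x j)" for i j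
    using \<open>strict_mono \<sigma>\<close> lim distortion by (rule dist_eq_if_distortion_vanishes)
  moreover have "ball_mass_transfer_limit mX mY x g"
    unfolding ball_mass_transfer_limit_def using \<open>strict_mono \<sigma>\<close> lim transfer by blast
  ultimately show ?thesis by (rule that)
qed

section \<open>The push-forward under the limit isometry\<close>

lemma measure_lt_finite_subcover:
  assumes "finite_measure M" and B: "\<And>i. B i \<in> sets M" and cover: "A \<subseteq> (\<Union>i\<in>I. B i)"
    and "A \<in> sets M" and "\<eta> > 0"
  obtains N :: nat where "measure M A < measure M (\<Union>i\<in>I \<inter> {..<N}. B i) + \<eta>"
proof -
  interpret finite_measure M by fact
  define U where "U n = (\<Union>i\<in>I \<inter> {..<n}. B i)" for n
  have U_sets: "U n \<in> sets M" for n unfolding U_def using B by blast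
  have "A \<subseteq> (\<Union>n. U n)" using cover unfolding U_def by fastforce
  then have "measure M A \<le> measure M (\<Union>n. U n)"
    using U_sets \<open>A \<in> sets M\<close> by (intro finite_measure_mono) auto
  moreover have "(\<lambda>n. measure M (U n)) \<longlonglongrightarrow> measure M (\<Union>n. U n)"
    using U_sets by (intro finite_Lim_measure_incseq) (auto simp: incseq_def U_def)
  then have "\<forall>\<^sub>F n in sequentially. measure M (\<Union>n. U n) - \<eta> < measure M (U n)"
    using \<open>\<eta> > 0\<close> by (intro order_tendstoD(1)) auto
  then obtain N where "measure M (\<Union>n. U n) - \<eta> < measure M (U N)"
    unfolding eventually_sequentially by blast
  ultimately show ?thesis using that[of N] unfolding U_def by linarith
qed

lemma measure_le_thickening_of_transfer_limit:
  fixes mX :: "'a::polish_space measure" and mY :: "'b::polish_space measure"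
  assumes X: "mm_space mX" and Y: "mm_space mY"
    and dense: "mm_support mX \<subseteq> closure (range x)"
    and lim: "ball_mass_transfer_limit mX mY x g"
    and iso: "\<And>i a. a \<in> mm_support mX \<Longrightarrow> dist (g i) (F a) = dist (x i) a"
    and A: "A \<in> sets mX" "A \<subseteq> mm_support mX" "F ` A \<subseteq> C" and "s > 0"
  shows "measure mX A \<le> measure mY {y. infdist y C \<le> s}"
proof (rule field_le_epsilon)
  fix \<eta> :: real assume "\<eta> > 0"
  interpret PX: prob_space mX using X by (simp add: mm_space_def)
  interpret PY: prob_space mY using Y by (simp add: mm_space_def)
  have sX: "sets mX = sets borel" and sY: "sets mY = sets borel"
    using X Y by (simp_all add: mm_space_def)
  obtain y \<sigma> where "strict_mono \<sigma>" and conv: "\<And>i. (\<lambda>m. y (\<sigma> m) i) \<longlonglongrightarrow> g i"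
    and transfer: "\<And>k. ball_mass_transfer mX mY x (y k) k (inverse (real (Suc k)))"
    using lim unfolding ball_mass_transfer_limit_def by blast
  define \<rho> where "\<rho> = s / 4"
  have "\<rho> > 0" using \<open>s > 0\<close> by (simp add: \<rho>_def)
  define I where "I = {i. \<exists>a\<in>A. dist (x i) a < \<rho>}"
  have "A \<subseteq> (\<Union>i\<in>I. ball (x i) \<rho>)"
  proof
    fix a assume "a \<in> A"
    then have "a \<in> closure (range x)" using A(2) dense by blast
    then obtain i where "dist (x i) a < \<rho>"
      using \<open>\<rho> > 0\<close> unfolding closure_approachable by blast
    with \<open>a \<in> A\<close> show "a \<in> (\<Union>i\<in>I. ball (x i) \<rho>)" unfolding I_def by auto
  qed
  moreover have "\<eta> / 2 > 0" using \<open>\<eta> > 0\<close> by simp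
  ultimately obtain N :: nat
    where N: "measure mX A < measure mX (\<Union>i\<in>I \<inter> {..<N}. ball (x i) \<rho>) + \<eta> / 2"
    using measure_lt_finite_subcover[OF PX.finite_measure_axioms _ _ A(1)] sX by (metis borel_open open_ball)
  have "\<forall>\<^sub>F m in sequentially. \<forall>i\<in>{..<N}. dist (y (\<sigma> m) i) (g i) < \<rho>"
    by (rule eventually_ball_finite) (use conv \<open>\<rho> > 0\<close> in \<open>auto intro: tendstoD\<close>)
  moreover have "\<forall>\<^sub>F m in sequentially. inverse (real (Suc m)) < min \<rho> (\<eta> / 2)"
    using \<open>\<rho> > 0\<close> \<open>\<eta> > 0\<close> by (intro order_tendstoD(2)[OF LIMSEQ_inverse_real_of_nat]) simp
  moreover have "\<forall>\<^sub>F m in sequentially. N \<le> m" by (rule eventually_ge_at_top)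
  ultimately have "\<forall>\<^sub>F m in sequentially. (\<forall>i\<in>{..<N}. dist (y (\<sigma> m) i) (g i) < \<rho>) \<and>
      inverse (real (Suc m)) < min \<rho> (\<eta> / 2) \<and> N \<le> m"
    by (intro eventually_conj)
  then obtain m where close: "\<forall>i\<in>{..<N}. dist (y (\<sigma> m) i) (g i) < \<rho>"
    and small: "inverse (real (Suc m)) < min \<rho> (\<eta> / 2)" and "N \<le> m"
    unfolding eventually_sequentially by blast
  define k where "k = \<sigma> m"
  define d where "d = inverse (real (Suc k))"
  have "m \<le> k" unfolding k_def using \<open>strict_mono \<sigma>\<close> by (rule seq_suble)
  then have "d \<le> inverse (real (Suc m))"
    unfolding d_def by (intro le_imp_inverse_le) auto
  then have "d < min \<rho> (\<eta> / 2)" using small by linarith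
  have "I \<inter> {..<N} \<subseteq> {..<k}" using \<open>N \<le> m\<close> \<open>m \<le> k\<close> by auto
  then have "measure mX (\<Union>i\<in>I \<inter> {..<N}. ball (x i) \<rho>)
      \<le> measure mY (\<Union>i\<in>I \<inter> {..<N}. cball (y k i) (\<rho> + d)) + d"
    using transfer[of k, unfolded ball_mass_transfer_def] \<open>\<rho> > 0\<close>
    unfolding d_def by blast
  also have "measure mY (\<Union>i\<in>I \<inter> {..<N}. cball (y k i) (\<rho> + d)) \<le> measure mY {y. infdist y C \<le> s}"
  proof (rule PY.finite_measure_mono)
    show "(\<Union>i\<in>I \<inter> {..<N}. cball (y k i) (\<rho> + d)) \<subseteq> {y. infdist y C \<le> s}"
    proof clarify
      fix i z assume "i \<in> I" "i < N" "z \<in> cball (y k i) (\<rho> + d)"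
      then obtain a where "a \<in> A" "dist (x i) a < \<rho>" unfolding I_def by blast
      then have "a \<in> mm_support mX" "F a \<in> C" using A(2,3) by auto
      then have "infdist (g i) C \<le> dist (x i) a"
        using iso[of a i] infdist_le[of "F a" C "g i"] by simp
      moreover have "infdist z C \<le> infdist (g i) C + dist (y k i) (g i) + dist (y k i) z"
        using infdist_triangle[of z C "g i"] dist_triangle[of z "g i" "y k i"]
        by (simp add: dist_commute)
      moreover have "dist (y k i) (g i) < \<rho>" using close \<open>i < N\<close> unfolding k_def by simp
      moreover have "dist (y k i) z \<le> \<rho> + d" using \<open>z \<in> cball (y k i) (\<rho> + d)\<close> by simp
      ultimately show "infdist z C \<le> s"
        using \<open>dist (x i) a < \<rho>\<close> \<open>d < min \<rho> (\<eta> / 2)\<close> unfolding \<rho>_def by linarith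
    qed
    show "{y. infdist y C \<le> s} \<in> sets mY"
      unfolding sY by (intro borel_closed closed_Collect_le continuous_intros)
  qed
  finally show "measure mX A \<le> measure mY {y. infdist y C \<le> s} + \<eta>"
    using N \<open>d < min \<rho> (\<eta> / 2)\<close> by linarith
qed

lemma measure_le_closed_if_le_thickenings:
  fixes M :: "'a::metric_space measure"
  assumes "finite_measure M" and sets: "sets M = sets borel" and "closed C" "C \<noteq> {}"
    and le: "\<And>s. s > 0 \<Longrightarrow> c \<le> measure M {y. infdist y C \<le> s}"
  shows "c \<le> measure M C"
proof -
  interpret finite_measure M by fact
  define T where "T n = {y. infdist y C \<le> inverse (real (Suc n))}" for n
  have "range T \<subseteq> sets M"
    unfolding T_def sets by (auto intro!: borel_closed closed_Collect_le continuous_intros)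
  moreover have "decseq T"
    unfolding T_def decseq_def
    by (auto intro: order_trans[OF _ le_imp_inverse_le])
  ultimately have "(\<lambda>n. measure M (T n)) \<longlonglongrightarrow> measure M (\<Inter>n. T n)"
    by (rule finite_Lim_measure_decseq)
  moreover have "(\<Inter>n. T n) = C"
  proof (intro equalityI subsetI)
    fix y assume "y \<in> (\<Inter>n. T n)"
    then have "infdist y C \<le> 0"
      by (intro LIMSEQ_le_const[OF LIMSEQ_inverse_real_of_nat]) (auto simp: T_def)
    then show "y \<in> C"
      using infdist_nonneg[of y C] in_closed_iff_infdist_zero[OF \<open>closed C\<close> \<open>C \<noteq> {}\<close>] by simp
  qed (simp add: T_def)
  ultimately show ?thesis
    using le by (intro LIMSEQ_le_const) (auto simp: T_def)
qed

lemma exists_isometry_with_closed_measure_le: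
  fixes mX :: "'a::polish_space measure" and mY :: "'b::polish_space measure"
  assumes X: "mm_space mX" and Y: "mm_space mY" and E: "d_Eur mX mY = 0"
  obtains f where "f \<in> borel_measurable borel"
    and "\<And>u v. u \<in> mm_support mX \<Longrightarrow> v \<in> mm_support mX \<Longrightarrow> dist (f u) (f v) = dist u v"
    and "\<And>C. closed C \<Longrightarrow> measure mX (f -` C \<inter> mm_support mX) \<le> measure mY C"
proof -
  have sX: "sets mX = sets borel" and sY: "sets mY = sets borel"
    and "prob_space mX" and "finite_measure mY"
    using X Y by (simp_all add: mm_space_def prob_space.finite_measure)
  obtain x :: "nat \<Rightarrow> 'a" where "range x \<subseteq> mm_support mX" and dense: "mm_support mX \<subseteq> closure (range x)"
    using dense_seq_in_mm_support[OF \<open>prob_space mX\<close> sX] .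
  then have xS: "x i \<in> mm_support mX" for i by blast
  obtain g :: "nat \<Rightarrow> 'b" where g: "\<And>i j. dist (g i) (g j) = dist (x i) (x j)"
    and lim: "ball_mass_transfer_limit mX mY x g"
    by (rule exists_isometric_ball_mass_transfer_limit[OF X Y E, where x = x, OF xS]) (rule that)
  obtain F :: "'a \<Rightarrow> 'b" where F: "\<And>u v. u \<in> closure (range x) \<Longrightarrow> v \<in> closure (range x) \<Longrightarrow> dist (F u) (F v) = dist u v"
    and Fx: "\<And>i. F (x i) = g i"
    by (rule isometric_extension_to_closure[OF g]) (rule that)
  have iso: "dist (F u) (F v) = dist u v" if "u \<in> mm_support mX" "v \<in> mm_support mX" for u v
    using F that dense by blast
  text \<open>Off the support the value of \<open>f\<close> is irrelevant; a constant keeps it Borel.\<close>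
  define f where "f z = (if z \<in> mm_support mX then F z else F (x 0))" for z
  have "continuous_on (mm_support mX) F"
    unfolding continuous_on_iff
  proof (intro ballI allI impI)
    fix z and e :: real assume "z \<in> mm_support mX" "e > 0"
    then show "\<exists>d>0. \<forall>z'\<in>mm_support mX. dist z' z < d \<longrightarrow> dist (F z') (F z) < e"
      using iso by (intro exI[of _ e]) auto
  qed
  then have meas: "f \<in> borel_measurable borel"
    unfolding f_def using closed_mm_support[of mX]
    by (intro borel_measurable_continuous_on_if continuous_on_const) simp_all
  have f_iso: "dist (f u) (f v) = dist u v" if "u \<in> mm_support mX" "v \<in> mm_support mX" for u v
    using iso that unfolding f_def by simp
  have "measure mX (f -` C \<inter> mm_support mX) \<le> measure mY C" if "closed C" for C
  proof (cases "C = {}")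
    case False
    have "dist (g i) (f a) = dist (x i) a" if "a \<in> mm_support mX" for i a
      using f_iso[OF xS that] Fx xS unfolding f_def by simp
    moreover have "f -` C \<inter> mm_support mX \<in> sets mX"
      using measurable_sets_borel[OF meas borel_closed[OF \<open>closed C\<close>]]
        borel_closed[OF closed_mm_support[of mX]]
      unfolding sX by (simp add: sets.Int)
    ultimately have "measure mX (f -` C \<inter> mm_support mX) \<le> measure mY {y. infdist y C \<le> s}"
      if "s > 0" for s
      by (rule measure_le_thickening_of_transfer_limit[OF X Y dense lim]) (use that in blast)+
    then show ?thesis
      by (rule measure_le_closed_if_le_thickenings[OF \<open>finite_measure mY\<close> sY \<open>closed C\<close> False])
  qed simp
  with meas f_iso show ?thesis by (rule that)
qed

section \<open>Comparison of measures and supports\<close>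

text \<open>By inner regularity the inequality extends from closed sets to all Borel sets, and
  applying it to complements gives equality.\<close>
lemma prob_space_eqI_closed_le:
  fixes M N :: "'a::polish_space measure"
  assumes "prob_space M" "prob_space N" and sM: "sets M = sets borel" and sN: "sets N = sets borel"
    and le: "\<And>C. closed C \<Longrightarrow> measure M C \<le> measure N C"
  shows "M = N"
proof -
  interpret M: prob_space M by fact
  interpret N: prob_space N by fact
  have le_borel: "measure M B \<le> measure N B" if B: "B \<in> sets borel" for B
  proof -
    have "emeasure M B = (SUP K\<in>{K. K \<subseteq> B \<and> compact K}. emeasure M K)"
      using inner_regular[OF sM _ B] by simp
    also have "\<dots> \<le> emeasure N B"
    proof (rule SUP_least)
      fix K assume "K \<in> {K. K \<subseteq> B \<and> compact K}"
      then have "closed K" "K \<subseteq> B" by (auto intro: compact_imp_closed)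
      then have "emeasure M K \<le> emeasure N K"
        using le by (simp add: M.emeasure_eq_measure N.emeasure_eq_measure)
      also have "\<dots> \<le> emeasure N B" using \<open>K \<subseteq> B\<close> B sN by (intro emeasure_mono) auto
      finally show "emeasure M K \<le> emeasure N B" .
    qed
    finally show ?thesis by (simp add: M.emeasure_eq_measure N.emeasure_eq_measure)
  qed
  show ?thesis
  proof (rule measure_eqI)
    fix B assume "B \<in> sets M"
    then have B: "B \<in> sets borel" using sM by simp
    have "measure M (- B) = 1 - measure M B" "measure N (- B) = 1 - measure N B"
      using M.prob_compl[of B] N.prob_compl[of B] B sM sN
      by (simp_all add: Compl_eq_Diff_UNIV sets_eq_imp_space_eq[OF sM] sets_eq_imp_space_eq[OF sN])
    then have "measure M B = measure N B" using le_borel[OF B] le_borel[of "- B"] B by simp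
    then show "emeasure M B = emeasure N B" by (simp add: M.emeasure_eq_measure N.emeasure_eq_measure)
  qed (simp add: sM sN)
qed

lemma closed_isometric_image:
  fixes f :: "'a::complete_space \<Rightarrow> 'b::metric_space"
  assumes "closed S" and iso: "\<And>u v. u \<in> S \<Longrightarrow> v \<in> S \<Longrightarrow> dist (f u) (f v) = dist u v"
  shows "closed (f ` S)"
proof -
  have "uniform_space_class.complete (f ` S)"
    unfolding complete_def
  proof (intro allI impI)
    fix y assume y: "(\<forall>n. y n \<in> f ` S) \<and> Cauchy y"
    then have "\<forall>n. \<exists>z. z \<in> S \<and> y n = f z" by blast
    then obtain z where z: "\<And>n. z n \<in> S" and y_eq: "\<And>n. y n = f (z n)" by metis
    have "Cauchy y" using y by blast
    then have "Cauchy z" unfolding Cauchy_def using iso[OF z z] y_eq by simp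
    moreover have "uniform_space_class.complete S"
      using \<open>closed S\<close> by (simp add: complete_eq_closed)
    ultimately obtain l where "l \<in> S" "z \<longlonglongrightarrow> l"
      using z unfolding complete_def by blast
    then have "(\<lambda>n. dist (y n) (f l)) \<longlonglongrightarrow> 0"
      using iso[OF z \<open>l \<in> S\<close>] y_eq by (simp add: tendsto_dist_iff[symmetric])
    then have "y \<longlonglongrightarrow> f l" by (rule tendsto_dist_iff[THEN iffD2])
    then show "\<exists>l\<in>f ` S. y \<longlonglongrightarrow> l"
      using \<open>l \<in> S\<close> by blast
  qed
  then show ?thesis by (rule complete_imp_closed)
qed

lemma mm_support_distr_isometric:
  fixes M :: "'a::polish_space measure" and f :: "'a \<Rightarrow> 'b::metric_space"
  assumes sets: "sets M = sets borel" and meas: "f \<in> borel_measurable borel"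
    and iso: "\<And>u v. u \<in> mm_support M \<Longrightarrow> v \<in> mm_support M \<Longrightarrow> dist (f u) (f v) = dist u v"
  shows "mm_support (distr M borel f) = f ` mm_support M"
proof -
  note distr = emeasure_distr_Int_mm_support[OF sets meas borel_open]
  show ?thesis
  proof (intro equalityI subsetI)
    fix y assume y: "y \<in> mm_support (distr M borel f)"
    show "y \<in> f ` mm_support M"
    proof (rule ccontr)
      assume "y \<notin> f ` mm_support M"
      moreover have "open (- f ` mm_support M)"
        using closed_isometric_image[OF closed_mm_support iso] by (simp add: open_Compl)
      ultimately have "emeasure (distr M borel f) (- f ` mm_support M) > 0"
        using y unfolding mm_support_def by blast
      moreover have "f -` (- f ` mm_support M) \<inter> mm_support M = {}" by blast
      ultimately show False using distr[OF \<open>open (- f ` mm_support M)\<close>] by simp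
    qed
  next
    fix y assume "y \<in> f ` mm_support M"
    then obtain z where z: "z \<in> mm_support M" and "y = f z" by blast
    show "y \<in> mm_support (distr M borel f)"
      unfolding mm_support_def
    proof (intro CollectI allI impI)
      fix U assume U: "open U \<and> y \<in> U"
      then obtain e where "e > 0" "ball y e \<subseteq> U" using open_contains_ball by blast
      have "ball z e \<inter> mm_support M \<subseteq> f -` U \<inter> mm_support M"
      proof
        fix w assume w: "w \<in> ball z e \<inter> mm_support M"
        then have "f w \<in> ball y e" using iso[OF z, of w] \<open>y = f z\<close> by simp
        then show "w \<in> f -` U \<inter> mm_support M" using w \<open>ball y e \<subseteq> U\<close> by blast
      qed
      moreover have "f -` U \<inter> mm_support M \<in> sets M"
        using measurable_sets_borel[OF meas borel_open[of U]] U borel_closed[OF closed_mm_support[of M]]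
        unfolding sets by (simp add: sets.Int)
      ultimately have "emeasure M (ball z e \<inter> mm_support M) \<le> emeasure M (f -` U \<inter> mm_support M)"
        by (rule emeasure_mono)
      moreover have "emeasure M (ball z e) > 0"
        using z \<open>e > 0\<close> unfolding mm_support_def by simp
      then have "emeasure M (ball z e \<inter> mm_support M) > 0"
        using emeasure_Int_mm_support[OF sets, of "ball z e"] sets by simp
      ultimately show "emeasure (distr M borel f) U > 0"
        using distr[of U] U by simp
    qed
  qed
qed

theorem theorem7p6:
  fixes mX :: "'a::polish_space measure" and mY :: "'b::polish_space measure"
  assumes "mm_space mX" and "mm_space mY"
    and "d_Eur mX mY = 0"
  shows "mm_isomorphic mX mY"
proof -
  obtain f where meas: "f \<in> borel_measurable borel"
    and iso: "\<And>u v. u \<in> mm_support mX \<Longrightarrow> v \<in> mm_support mX \<Longrightarrow> dist (f u) (f v) = dist u v"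
    and le: "\<And>C. closed C \<Longrightarrow> measure mX (f -` C \<inter> mm_support mX) \<le> measure mY C"
    by (rule exists_isometry_with_closed_measure_le[OF assms]) (rule that)
  have sX: "sets mX = sets borel" and sY: "sets mY = sets borel" and "prob_space mX" "prob_space mY"
    using assms(1,2) by (simp_all add: mm_space_def)
  note push = emeasure_distr_Int_mm_support[OF sX meas]
  have "distr mX borel f = mY"
  proof (rule prob_space_eqI_closed_le[OF _ \<open>prob_space mY\<close> _ sY])
    show "prob_space (distr mX borel f)"
      using prob_space.prob_space_distr[OF \<open>prob_space mX\<close>] meas measurable_cong_sets[OF sX refl]
      by blast
    show "measure (distr mX borel f) C \<le> measure mY C" if "closed C" for C
      using push[OF borel_closed[OF that]] le[OF that] by (simp add: measure_def)
  qed simp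
  then have "f ` mm_support mX = mm_support mY"
    using mm_support_distr_isometric[OF sX meas iso] by simp
  moreover have "inj_on f (mm_support mX)"
    using iso by (intro inj_onI) (metis dist_eq_0_iff)
  moreover have "emeasure mY B = emeasure mX (f -` B \<inter> mm_support mX)" if "B \<in> sets mY" for B
    using push[of B] that \<open>distr mX borel f = mY\<close> sY by simp
  ultimately show ?thesis
    unfolding mm_isomorphic_def bij_betw_def using iso by blast
qed

end
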